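(* Let $n$ and $s$ be positive integers and let $L=\{\ell_1,\ldots,\ell_s\}$ be a set of $s$ non-negative integers. Let $\mathcal{F}=\{F_1,\ldots,F_m\}$ be a family of subsets of $[n]=\{1,\ldots,n\}$ such that $|F_i\cap F_j|\in L$ for all $1\le i,j\le m$ with $i\neq j$, and suppose $\mathcal{F}$ is ordered, i.e. there exists an index $1\le r\le m$ such that $n\in F_i$ for each $1\le i\le r$, $n\notin F_i$ for each $i>r$, and $|F_i|\le |F_j|$ for all $1\le i<j\le m$. Then $$m\le \sum_{i=0}^{s}\binom{n-1}{i}.$$
   Context: $[n]$ denotes $\{1,2,\ldots,n\}$. *)

theory Defs
  imports Main
begin

end

(*
  The polynomial method of Frankl and Wilson, applied in n - 1 variables. For each F_i let
  p_i(x) = prod (<v_{F_i}, x> - l), over the l in L with l < |F_i|, a product of at most s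
  linear factors, and substitute x_n = 1 to obtain a multilinear polynomial q_i of degree at
  most s in x_1, ..., x_{n-1}. Since the family is ordered, n in F_i forces n in F_j for
  j <= i, so q_i takes the value p_i(F_j) at F_j - {n}. That value is nonzero for j = i and
  zero for j < i, because then |F_i /\ F_j| < |F_i| lies in L. The q_i are therefore linearly
  independent in a space of dimension sum_{i <= s} C(n-1, i).
*)

theory Submission
  imports Defs Complex_Main "HOL-Library.Function_Algebras"
begin

lemma sum_fun_apply: "sum f A x = (\<Sum>a\<in>A. f a x)"
  by (induction A rule: infinite_finite_induct) auto

definition fun_scale :: "'b::field \<Rightarrow> ('a \<Rightarrow> 'b) \<Rightarrow> 'a \<Rightarrow> 'b" where
  "fun_scale c f = (\<lambda>x. c * f x)"

interpretation fun_vec: vector_space fun_scale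
  by unfold_locales (auto simp: fun_scale_def fun_eq_iff algebra_simps)

lemma fun_vec_span_hom_image:
  assumes "module_hom fun_scale fun_scale h" and "f \<in> fun_vec.span S"
    and "h ` S \<subseteq> fun_vec.span T"
  shows "h f \<in> fun_vec.span T"
proof -
  have "h f \<in> fun_vec.span (h ` S)"
    using module_hom.spans_image[OF assms(1), of "{f}" S] assms(2) by auto
  also have "\<dots> \<subseteq> fun_vec.span T"
    using assms(3) by (metis fun_vec.span_mono fun_vec.span_span)
  finally show ?thesis .
qed

lemma module_hom_mult_right: "module_hom fun_scale fun_scale (\<lambda>f. f * g)"
  by unfold_locales (auto simp: fun_scale_def fun_eq_iff algebra_simps)

lemma module_hom_comp_right: "module_hom fun_scale fun_scale (\<lambda>f. f \<circ> h)"
  by unfold_locales (auto simp: fun_scale_def fun_eq_iff)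

lemma fun_vec_span_mult:
  assumes "f \<in> fun_vec.span S" and "g \<in> fun_vec.span T"
  shows "f * g \<in> fun_vec.span {s * t | s t. s \<in> S \<and> t \<in> T}"
proof (rule fun_vec_span_hom_image[OF module_hom_mult_right assms(1)], safe)
  fix s assume "s \<in> S"
  have "g * s \<in> fun_vec.span {s * t | s t. s \<in> S \<and> t \<in> T}"
    by (rule fun_vec_span_hom_image[OF module_hom_mult_right assms(2)])
      (use \<open>s \<in> S\<close> in \<open>auto intro!: fun_vec.span_base, metis mult.commute\<close>)
  then show "s * g \<in> fun_vec.span {s * t | s t. s \<in> S \<and> t \<in> T}"
    by (simp add: mult.commute)
qed

lemma inj_on_if_triangular:
  fixes g :: "'i::linorder \<Rightarrow> 'a \<Rightarrow> 'b::zero"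
  assumes "\<And>i. i \<in> I \<Longrightarrow> g i (x i) \<noteq> 0"
    and "\<And>i j. i \<in> I \<Longrightarrow> j \<in> I \<Longrightarrow> j < i \<Longrightarrow> g i (x j) = 0"
  shows "inj_on g I"
proof (rule inj_onI, rule ccontr)
  fix i j assume "i \<in> I" "j \<in> I" "g i = g j" "i \<noteq> j"
  then show False
    using assms by (metis neq_iff)
qed

lemma independent_if_triangular:
  fixes g :: "'i::wellorder \<Rightarrow> 'a \<Rightarrow> 'b::field"
  assumes diag: "\<And>i. i \<in> I \<Longrightarrow> g i (x i) \<noteq> 0"
    and below: "\<And>i j. i \<in> I \<Longrightarrow> j \<in> I \<Longrightarrow> j < i \<Longrightarrow> g i (x j) = 0"
  shows "fun_vec.independent (g ` I)"
proof
  assume "fun_vec.dependent (g ` I)"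
  then obtain t u v where t: "finite t" "t \<subseteq> g ` I" "(\<Sum>v\<in>t. fun_scale (u v) v) = 0"
    and "v \<in> t" "u v \<noteq> 0"
    unfolding fun_vec.dependent_explicit by blast
  define J where "J = {i \<in> I. g i \<in> t \<and> u (g i) \<noteq> 0}"
  have "J \<noteq> {}"
    using t(2) \<open>v \<in> t\<close> \<open>u v \<noteq> 0\<close> by (auto simp: J_def)
  then obtain i0 where i0: "i0 \<in> I" "g i0 \<in> t" "u (g i0) \<noteq> 0"
    and least: "\<And>i. i \<in> J \<Longrightarrow> i0 \<le> i"
    unfolding J_def by (metis (mono_tags, lifting) LeastI Least_le ex_in_conv mem_Collect_eq)
  \<comment> \<open>Evaluating the vanishing combination at \<open>x i0\<close> kills every other term.\<close>
  have "0 = (\<Sum>v\<in>t. u v * v (x i0))"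
    using fun_cong[OF t(3), of "x i0"] by (simp add: fun_scale_def sum_fun_apply)
  also have "\<dots> = u (g i0) * g i0 (x i0) + (\<Sum>v\<in>t - {g i0}. u v * v (x i0))"
    using i0 t(1) by (intro sum.remove)
  also have "(\<Sum>v\<in>t - {g i0}. u v * v (x i0)) = 0"
  proof (intro sum.neutral ballI)
    fix w assume w: "w \<in> t - {g i0}"
    then obtain i where i: "i \<in> I" "w = g i"
      using t(2) by blast
    show "u w * w (x i0) = 0"
    proof (cases "u w = 0")
      case False
      then have "i0 < i"
        using least[of i] i w by (auto simp: J_def order.order_iff_strict)
      then show ?thesis
        using below[of i i0] i i0 by simp
    qed simp
  qed
  finally show False
    using diag[of i0] i0 by simp
qed

text \<open>Multilinear polynomials are represented by their values on 0/1-vectors, i.e. as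
  functions on sets: \<open>set_monomial S\<close> is the monomial \<open>\<Prod>a\<in>S. x\<^sub>a\<close>, and
  \<open>low_degree A k\<close> is the space of multilinear polynomials of degree at most \<open>k\<close> in the
  variables \<open>A\<close>.\<close>

definition set_monomial :: "'a set \<Rightarrow> 'a set \<Rightarrow> 'b::field" where
  "set_monomial S X = (if S \<subseteq> X then 1 else 0)"

definition low_degree :: "'a set \<Rightarrow> nat \<Rightarrow> ('a set \<Rightarrow> 'b::field) set" where
  "low_degree A k = fun_vec.span (set_monomial ` {S. S \<subseteq> A \<and> card S \<le> k})"

lemma low_degree_mono: "k \<le> k' \<Longrightarrow> low_degree A k \<subseteq> low_degree A k'"
  unfolding low_degree_def by (rule fun_vec.span_mono) auto

lemma const_in_low_degree: "(\<lambda>X. c) \<in> low_degree A k"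
proof -
  have "set_monomial {} \<in> low_degree A k"
    unfolding low_degree_def by (rule fun_vec.span_base) auto
  then have "fun_scale c (set_monomial {}) \<in> low_degree A k"
    unfolding low_degree_def by (rule fun_vec.span_scale)
  then show ?thesis
    by (simp add: fun_scale_def set_monomial_def)
qed

lemma card_inter_in_low_degree:
  assumes "finite B" and "B \<subseteq> A"
  shows "(\<lambda>X. of_nat (card (B \<inter> X))) \<in> low_degree A 1"
proof -
  have "(\<lambda>X. of_nat (card (B \<inter> X))) = (\<Sum>a\<in>B. set_monomial {a})"
    using assms(1) by (auto simp: fun_eq_iff sum_fun_apply set_monomial_def sum.If_cases Int_def)
  also have "\<dots> \<in> low_degree A 1"
    unfolding low_degree_def using assms(2)
    by (intro fun_vec.span_sum fun_vec.span_base) auto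
  finally show ?thesis .
qed

lemma mult_in_low_degree:
  assumes "f \<in> low_degree A k" and "g \<in> low_degree A k'"
  shows "f * g \<in> low_degree A (k + k')"
proof -
  have "set_monomial S * set_monomial T \<in> set_monomial ` {U. U \<subseteq> A \<and> card U \<le> k + k'}"
    if "S \<subseteq> A" "card S \<le> k" "T \<subseteq> A" "card T \<le> k'" for S T
  proof
    show "set_monomial S * set_monomial T = set_monomial (S \<union> T)"
      by (auto simp: fun_eq_iff set_monomial_def)
    show "S \<union> T \<in> {U. U \<subseteq> A \<and> card U \<le> k + k'}"
      using that card_Un_le[of S T] by auto
  qed
  then have "fun_vec.span {s * t |s t. s \<in> set_monomial ` {S. S \<subseteq> A \<and> card S \<le> k}
                    \<and> t \<in> set_monomial ` {S. S \<subseteq> A \<and> card S \<le> k'}}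
             \<subseteq> low_degree A (k + k')"
    unfolding low_degree_def by (intro fun_vec.span_mono) blast
  then show ?thesis
    using fun_vec_span_mult[OF assms[unfolded low_degree_def]] by blast
qed

lemma prod_in_low_degree:
  assumes "finite I" and "\<And>i. i \<in> I \<Longrightarrow> f i \<in> low_degree A 1"
  shows "(\<lambda>X. \<Prod>i\<in>I. f i X) \<in> low_degree A (card I)"
  using assms
proof (induction I rule: finite_induct)
  case empty
  show ?case by (simp add: const_in_low_degree)
next
  case (insert i I)
  have "f i * (\<lambda>X. \<Prod>i\<in>I. f i X) \<in> low_degree A (1 + card I)"
    using insert by (intro mult_in_low_degree) auto
  then show ?case
    using insert.hyps by (simp add: times_fun_def)
qed

text \<open>Evaluation at \<open>insert a X\<close> is the substitution \<open>x\<^sub>a = 1\<close>.\<close>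

lemma low_degree_insert:
  assumes "f \<in> low_degree A k"
  shows "(\<lambda>X. f (insert a X)) \<in> low_degree (A - {a}) k"
proof -
  have "set_monomial S \<circ> insert a \<in> low_degree (A - {a}) k"
    if "S \<subseteq> A" "card S \<le> k" for S :: "'a set"
  proof -
    have "set_monomial S \<circ> insert a = set_monomial (S - {a})"
      by (auto simp: fun_eq_iff set_monomial_def)
    moreover have "card (S - {a}) \<le> k"
      using card_Diff1_le[of S a] that by linarith
    ultimately show ?thesis
      unfolding low_degree_def using that by (intro fun_vec.span_base) auto
  qed
  then have "f \<circ> insert a \<in> low_degree (A - {a}) k"
    using assms unfolding low_degree_def
    by (intro fun_vec_span_hom_image[OF module_hom_comp_right]) auto
  then show ?thesis
    by (simp add: comp_def)
qed

lemma card_subsets_card_le: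
  assumes "finite A"
  shows "card {S. S \<subseteq> A \<and> card S \<le> k} = (\<Sum>i=0..k. card A choose i)"
proof (induction k)
  case 0
  have "{S. S \<subseteq> A \<and> card S \<le> 0} = {S. S \<subseteq> A \<and> card S = 0}"
    by auto
  then show ?case
    using n_subsets[OF assms, of 0] by simp
next
  case (Suc k)
  have "{S. S \<subseteq> A \<and> card S \<le> Suc k}
        = {S. S \<subseteq> A \<and> card S \<le> k} \<union> {S. S \<subseteq> A \<and> card S = Suc k}"
    by auto
  moreover have "card \<dots> = card {S. S \<subseteq> A \<and> card S \<le> k} + card {S. S \<subseteq> A \<and> card S = Suc k}"
    using assms by (intro card_Un_disjoint) auto
  ultimately show ?case
    using Suc n_subsets[OF assms, of "Suc k"] by simp
qed

lemma card_le_sum_choose_if_triangular: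
  fixes g :: "'i::wellorder \<Rightarrow> 'a set \<Rightarrow> 'b::field"
  assumes "finite A" and "\<And>i. i \<in> I \<Longrightarrow> g i \<in> low_degree A k"
    and "\<And>i. i \<in> I \<Longrightarrow> g i (x i) \<noteq> 0"
    and "\<And>i j. i \<in> I \<Longrightarrow> j \<in> I \<Longrightarrow> j < i \<Longrightarrow> g i (x j) = 0"
  shows "card I \<le> (\<Sum>i=0..k. card A choose i)"
proof -
  let ?T = "set_monomial ` {S. S \<subseteq> A \<and> card S \<le> k} :: ('a set \<Rightarrow> 'b) set"
  have "finite {S. S \<subseteq> A \<and> card S \<le> k}"
    using assms(1) by simp
  then have "card (g ` I) \<le> card ?T"
    using fun_vec.independent_span_bound[OF _ independent_if_triangular[of I g x]] assms
    unfolding low_degree_def by blast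
  also have "\<dots> \<le> card {S. S \<subseteq> A \<and> card S \<le> k}"
    using assms(1) by (intro card_image_le) simp
  finally show ?thesis
    using card_image[OF inj_on_if_triangular[of I g x]] assms
    by (simp add: card_subsets_card_le[OF assms(1)])
qed

definition intersection_poly :: "nat set \<Rightarrow> 'a set \<Rightarrow> 'a set \<Rightarrow> real" where
  "intersection_poly L F X = (\<Prod>l\<in>{l\<in>L. l < card F}. real (card (F \<inter> X)) - real l)"

lemma intersection_poly_in_low_degree:
  assumes "finite L" and "finite F" and "F \<subseteq> A"
  shows "intersection_poly L F \<in> low_degree A (card L)"
proof -
  have "(\<lambda>X. real (card (F \<inter> X))) - (\<lambda>X. real l) \<in> low_degree A 1" for l
    using card_inter_in_low_degree[OF assms(2,3)] const_in_low_degree[of "real l" A 1]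
    unfolding low_degree_def by (rule fun_vec.span_diff)
  then have "intersection_poly L F \<in> low_degree A (card {l\<in>L. l < card F})"
    unfolding intersection_poly_def by (intro prod_in_low_degree) (auto simp: fun_diff_def)
  also have "\<dots> \<subseteq> low_degree A (card L)"
    using assms(1) by (intro low_degree_mono card_mono) auto
  finally show ?thesis .
qed

lemma intersection_poly_self_neq_0: "intersection_poly L F F \<noteq> 0"
  by (simp add: intersection_poly_def)

lemma intersection_poly_insert_Diff:
  assumes "a \<in> F \<Longrightarrow> a \<in> G"
  shows "intersection_poly L F (insert a (G - {a})) = intersection_poly L F G"
proof -
  have "F \<inter> insert a (G - {a}) = F \<inter> G"
    using assms by auto
  then show ?thesis
    by (simp add: intersection_poly_def)
qed

lemma intersection_poly_eq_0:
  assumes "finite F" and "finite G" and "F \<noteq> G" and "card G \<le> card F"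
    and "card (F \<inter> G) \<in> L"
  shows "intersection_poly L F G = 0"
proof -
  have "\<not> F \<subseteq> G"
    using assms(1-4) card_seteq by blast
  then have "card (F \<inter> G) < card F"
    using assms(1) by (intro psubset_card_mono) auto
  then show ?thesis
    using assms(5) by (auto simp: intersection_poly_def intro!: prod_zero)
qed

theorem theorem3:
  fixes n s m :: nat and L :: "nat set" and F :: "nat \<Rightarrow> nat set"
  assumes "n > 0" and "s > 0"
    and "finite L" and "card L = s"
    and "\<forall>i\<in>{1..m}. F i \<subseteq> {1..n}"
    and "inj_on F {1..m}"
    and "\<forall>i\<in>{1..m}. \<forall>j\<in>{1..m}. i \<noteq> j \<longrightarrow> card (F i \<inter> F j) \<in> L"
    and "\<exists>r. 1 \<le> r \<and> r \<le> m \<and> (\<forall>i\<in>{1..r}. n \<in> F i)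
              \<and> (\<forall>i\<in>{r<..m}. n \<notin> F i)"
    and "\<forall>i\<in>{1..m}. \<forall>j\<in>{1..m}. i < j \<longrightarrow> card (F i) \<le> card (F j)"
  shows "m \<le> (\<Sum>i=0..s. (n - 1) choose i)"
proof -
  obtain r where r: "\<forall>i\<in>{1..r}. n \<in> F i" "\<forall>i\<in>{r<..m}. n \<notin> F i"
    using assms(8) by blast
  have fin: "finite (F i)" if "i \<in> {1..m}" for i
    using assms(5) that finite_subset by blast
  define g where "g i = (\<lambda>X. intersection_poly L (F i) (insert n X))" for i
  have "g i \<in> low_degree ({1..n} - {n}) s" if "i \<in> {1..m}" for i
    unfolding g_def assms(4)[symmetric] using assms(5) that
    by (intro low_degree_insert intersection_poly_in_low_degree assms(3) fin) auto
  moreover have "{1..n} - {n} = {1..<n}"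
    by auto
  moreover have g_at: "g i (F j - {n}) = intersection_poly L (F i) (F j)"
    if "i \<in> {1..m}" "j \<in> {1..m}" "j \<le> i" for i j
    using r that unfolding g_def
    by (intro intersection_poly_insert_Diff) (metis atLeastAtMost_iff greaterThanAtMost_iff le_trans not_le)
  ultimately have "card {1..m} \<le> (\<Sum>i=0..s. card {1..<n} choose i)"
  proof (intro card_le_sum_choose_if_triangular[where x = "\<lambda>j. F j - {n}"])
    show "g i (F j - {n}) = 0" if "i \<in> {1..m}" "j \<in> {1..m}" "j < i" for i j
      using that assms(6,7,9) g_at[of i j]
      by (auto intro!: intersection_poly_eq_0 fin dest: inj_onD)
  qed (simp_all add: g_at intersection_poly_self_neq_0)
  then show ?thesis
    by simp
qed

end
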